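(* Let $T>0$, $0<\eta<T$, $0<\alpha<\frac{1}{\eta}$, let $f\in C([0,\infty),[0,\infty))$, and let $a\in C([0,T],[0,\infty))$ with $a(t_0)>0$ for some $t_0\in[0,T]$. Consider the boundary value problem \[ u''(t)+a(t)f(u(t))=0,\quad 0<t<T,\qquad u'(0)=0,\quad u(T)=\alpha\int_0^{\eta}u(s)\,ds. \tag{P} \] Suppose that either (i) $f_0=0$ and $f_\infty=\infty$, or (ii) $f_0=\infty$ and $f_\infty=0$. Then (P) has at least one positive solution.
   Context: $f_0=\lim_{u\to0^+}\frac{f(u)}{u}$ and $f_\infty=\lim_{u\to\infty}\frac{f(u)}{u}$ (these limits are assumed to exist in $[0,\infty]$ with the stated values). A positive solution of (P) is a function $u\in C^2([0,T])$ satisfying (P) with $u(t)\ge0$ on $[0,T]$ and $u$ not identically zero. *)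

theory Defs
  imports "HOL-Analysis.Analysis"
begin

definition C2_on :: "real \<Rightarrow> (real \<Rightarrow> real) \<Rightarrow> (real \<Rightarrow> real) \<Rightarrow> (real \<Rightarrow> real) \<Rightarrow> bool" where
  "C2_on T u u' u'' \<longleftrightarrow>
     (\<forall>t\<in>{0..T}. (u has_real_derivative u' t) (at t within {0..T})) \<and>
     (\<forall>t\<in>{0..T}. (u' has_real_derivative u'' t) (at t within {0..T})) \<and>
     continuous_on {0..T} u''"

definition positive_solution ::
  "real \<Rightarrow> real \<Rightarrow> real \<Rightarrow> (real \<Rightarrow> real) \<Rightarrow> (real \<Rightarrow> real) \<Rightarrow> (real \<Rightarrow> real) \<Rightarrow> bool" where
  "positive_solution T \<eta> \<alpha> a f u \<longleftrightarrow>
     (\<exists>u' u''. C2_on T u u' u'' \<and>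
        (\<forall>t\<in>{0<..<T}. u'' t + a t * f (u t) = 0) \<and>
        u' 0 = 0 \<and>
        u T = \<alpha> * integral {0..\<eta>} u \<and>
        (\<forall>t\<in>{0..T}. u t \<ge> 0) \<and>
        (\<exists>t\<in>{0..T}. u t \<noteq> 0))"

end

theory Submission
  imports Defs "HOL-Complex_Analysis.Great_Picard"
begin

text \<open>The solution is found by shooting from \<open>u(0) = c, u'(0) = 0\<close>.  Such solutions are
concave and decreasing, and the sign of the defect \<open>u(T) - \<alpha> \<integral>\<^sub>0\<^sup>\<eta> u\<close> is governed by the growth
of f on \<open>[0,c]\<close>: it is positive where f is sublinear and negative where f is superlinear, so
either hypothesis yields initial values \<open>c1 < c2\<close> with defects of opposite signs.  Since f is
merely continuous, the initial value problem is solved approximately by Euler polygons, which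
depend continuously on c and obey the same sign estimates.  The intermediate value theorem gives
polygons with zero defect, Arzela-Ascoli a uniformly convergent subsequence, and the limit is a
solution with zero defect; concavity and \<open>\<alpha> \<eta> < 1\<close> make it positive.\<close>

section \<open>Second primitives\<close>

text \<open>\<open>w = second_primitive k\<close> solves \<open>w'' = k, w(0) = w'(0) = 0\<close>.  The kernels of Euler polygons
are step functions, so besides continuous kernels we allow any k for which k and \<open>s k\<close> are
integrable.\<close>
definition second_primitive :: "(real \<Rightarrow> real) \<Rightarrow> real \<Rightarrow> real" where
  "second_primitive k t = integral {0..t} (\<lambda>s. (t - s) * k s)"

definition moment_integrable :: "real \<Rightarrow> (real \<Rightarrow> real) \<Rightarrow> bool" where
  "moment_integrable T k \<longleftrightarrow> k integrable_on {0..T} \<and> (\<lambda>s. s * k s) integrable_on {0..T}"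

lemma moment_integrable_subinterval:
  assumes "moment_integrable T k" "0 \<le> x" "y \<le> T"
  shows "k integrable_on {x..y}" "(\<lambda>s. s * k s) integrable_on {x..y}"
    "(\<lambda>s. (t - s) * k s) integrable_on {x..y}"
proof -
  have sub: "{x..y} \<subseteq> {0..T}" using assms by auto
  show k: "k integrable_on {x..y}" and sk: "(\<lambda>s. s * k s) integrable_on {x..y}"
    using assms sub integrable_on_subinterval unfolding moment_integrable_def by blast+
  have "(\<lambda>s. t * k s - s * k s) integrable_on {x..y}"
    using k sk by (intro integrable_diff integrable_on_mult_right)
  then show "(\<lambda>s. (t - s) * k s) integrable_on {x..y}" by (simp add: algebra_simps)
qed

lemma moment_integrable_continuous:
  "continuous_on {0..T} k \<Longrightarrow> moment_integrable T k"
  unfolding moment_integrable_def by (auto intro!: integrable_continuous_real continuous_intros)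

lemma moment_integrable_add_scaled:
  assumes "moment_integrable T k" "moment_integrable T l"
  shows "moment_integrable T (\<lambda>s. k s + x * l s)"
proof -
  have "(\<lambda>s. s * (k s + x * l s)) = (\<lambda>s. s * k s + x * (s * l s))"
    by (simp add: algebra_simps)
  then show ?thesis
    using assms unfolding moment_integrable_def by (auto intro!: integrable_add integrable_on_mult_right)
qed

lemma second_primitive_cong:
  "(\<And>s. s \<in> {0..t} \<Longrightarrow> k s = l s) \<Longrightarrow> second_primitive k t = second_primitive l t"
  unfolding second_primitive_def by (intro integral_cong) simp

lemma second_primitive_0 [simp]: "second_primitive k 0 = 0"
  unfolding second_primitive_def by simp

lemma second_primitive_eq:
  assumes "moment_integrable T k" "t \<le> T"
  shows "second_primitive k t = t * integral {0..t} k - integral {0..t} (\<lambda>s. s * k s)"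
proof -
  have "second_primitive k t = integral {0..t} (\<lambda>s. t * k s - s * k s)"
    unfolding second_primitive_def by (simp add: algebra_simps)
  also have "\<dots> = t * integral {0..t} k - integral {0..t} (\<lambda>s. s * k s)"
    using moment_integrable_subinterval[OF assms(1) order_refl assms(2)]
    by (simp add: integral_diff integrable_on_mult_right)
  finally show ?thesis .
qed

lemma second_primitive_add_scaled:
  assumes "moment_integrable T k" "moment_integrable T l" "t \<le> T"
  shows "second_primitive (\<lambda>s. k s + x * l s) t = second_primitive k t + x * second_primitive l t"
proof -
  have "second_primitive (\<lambda>s. k s + x * l s) t
      = integral {0..t} (\<lambda>s. (t - s) * k s + x * ((t - s) * l s))"
    unfolding second_primitive_def by (simp add: algebra_simps)
  moreover have "(\<lambda>s. (t - s) * k s) integrable_on {0..t}" "(\<lambda>s. (t - s) * l s) integrable_on {0..t}"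
    using moment_integrable_subinterval(3)[OF _ order_refl assms(3)] assms by auto
  ultimately show ?thesis
    unfolding second_primitive_def by (simp add: integral_add integrable_on_mult_right)
qed

lemma continuous_on_second_primitive:
  assumes "moment_integrable T k"
  shows "continuous_on {0..T} (second_primitive k)"
proof -
  have "continuous_on {0..T} (\<lambda>t. t * integral {0..t} k - integral {0..t} (\<lambda>s. s * k s))"
    using assms unfolding moment_integrable_def
    by (intro continuous_intros indefinite_integral_continuous_1) auto
  then show ?thesis
    by (rule continuous_on_eq) (use second_primitive_eq[OF assms] in auto)
qed

lemma second_primitive_nonneg:
  assumes "moment_integrable T k" "\<forall>s\<in>{0..T}. 0 \<le> k s" "t \<le> T"
  shows "0 \<le> second_primitive k t"
  unfolding second_primitive_def
  using assms moment_integrable_subinterval[OF assms(1) order_refl assms(3)]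
  by (intro integral_nonneg) auto

lemma second_primitive_diff:
  assumes "moment_integrable T k" "0 \<le> t" "t \<le> t'" "t' \<le> T"
  shows "second_primitive k t' - second_primitive k t
    = (t' - t) * integral {0..t} k + integral {t..t'} (\<lambda>s. (t' - s) * k s)"
proof -
  note int = moment_integrable_subinterval[OF assms(1)]
  have k: "integral {0..t'} k = integral {0..t} k + integral {t..t'} k"
    using Henstock_Kurzweil_Integration.integral_combine[of 0 t t' k] int(1)[OF order_refl assms(4)] assms by auto
  have sk: "integral {0..t'} (\<lambda>s. s * k s)
      = integral {0..t} (\<lambda>s. s * k s) + integral {t..t'} (\<lambda>s. s * k s)"
    using Henstock_Kurzweil_Integration.integral_combine[of 0 t t' "\<lambda>s. s * k s"] int(2)[OF order_refl assms(4)] assms by auto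
  have "integral {t..t'} (\<lambda>s. (t' - s) * k s) = integral {t..t'} (\<lambda>s. t' * k s - s * k s)"
    by (simp add: algebra_simps)
  also have "\<dots> = t' * integral {t..t'} k - integral {t..t'} (\<lambda>s. s * k s)"
    using int[of t t'] assms by (simp add: integral_diff integrable_on_mult_right)
  finally show ?thesis
    using second_primitive_eq[OF assms(1), of t] second_primitive_eq[OF assms(1), of t'] assms k sk
    by (simp add: algebra_simps)
qed

lemma second_primitive_mono_lipschitz:
  assumes "moment_integrable T k" "\<forall>s\<in>{0..T}. 0 \<le> k s \<and> k s \<le> M"
    and "0 \<le> t" "t \<le> t'" "t' \<le> T"
  shows "0 \<le> second_primitive k t' - second_primitive k t"
    and "second_primitive k t' - second_primitive k t \<le> 2 * T * M * (t' - t)"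
proof -
  note int = moment_integrable_subinterval[OF assms(1)]
  have M: "0 \<le> M" using assms by force
  have i0: "0 \<le> integral {0..t} k" using assms int[of 0 t] by (intro integral_nonneg) auto
  have "integral {0..t} k \<le> integral {0..t} (\<lambda>s. M)"
    using assms int[of 0 t] by (intro integral_le) auto
  also have "\<dots> \<le> T * M" using assms M by (simp add: mult_right_mono)
  finally have i1: "(t' - t) * integral {0..t} k \<le> (t' - t) * (T * M)"
    using assms by (intro mult_left_mono) auto
  have j0: "0 \<le> integral {t..t'} (\<lambda>s. (t' - s) * k s)"
    using assms int[of t t'] by (intro integral_nonneg) auto
  have "integral {t..t'} (\<lambda>s. (t' - s) * k s) \<le> integral {t..t'} (\<lambda>s. T * M)"
    using assms int[of t t'] M by (intro integral_le) (auto intro!: mult_mono)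
  then have j1: "integral {t..t'} (\<lambda>s. (t' - s) * k s) \<le> T * M * (t' - t)"
    using assms by (simp add: mult_ac)
  show "0 \<le> second_primitive k t' - second_primitive k t"
    using second_primitive_diff[OF assms(1,3-5)] i0 j0 assms by simp
  show "second_primitive k t' - second_primitive k t \<le> 2 * T * M * (t' - t)"
    using second_primitive_diff[OF assms(1,3-5)] i1 j1 by (simp add: algebra_simps)
qed

lemma second_primitive_chord:
  assumes "moment_integrable T k" "\<forall>s\<in>{0..T}. 0 \<le> k s" "0 \<le> t" "t \<le> T"
  shows "T * second_primitive k t \<le> t * second_primitive k T"
proof -
  note int = moment_integrable_subinterval(3)[OF assms(1)]
  have "T * second_primitive k t = integral {0..t} (\<lambda>s. T * ((t - s) * k s))"
    unfolding second_primitive_def by simp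
  also have "\<dots> \<le> integral {0..t} (\<lambda>s. t * ((T - s) * k s))"
  proof (rule integral_le)
    fix s assume s: "s \<in> {0..t}"
    then have "T * (t - s) \<le> t * (T - s)"
      using mult_left_mono[of t T s] assms by (simp add: algebra_simps)
    then show "T * ((t - s) * k s) \<le> t * ((T - s) * k s)"
      using mult_right_mono[of _ _ "k s"] assms s by (simp add: mult.assoc[symmetric])
  qed (use int assms in \<open>auto intro: integrable_on_mult_right\<close>)
  also have "\<dots> = t * integral {0..t} (\<lambda>s. (T - s) * k s)" by simp
  also have "\<dots> \<le> t * integral {0..T} (\<lambda>s. (T - s) * k s)"
    using assms int by (intro mult_left_mono integral_subset_le) auto
  finally show ?thesis unfolding second_primitive_def .
qed

lemma second_primitive_lower_bound:
  assumes "moment_integrable T k" "\<forall>s\<in>{0..T}. 0 \<le> k s"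
    and "0 \<le> t1" "t1 \<le> t2" "t2 \<le> T" "\<forall>s\<in>{t1..t2}. m \<le> k s"
  shows "m * (T - t2) * (t2 - t1) \<le> second_primitive k T"
proof -
  note int = moment_integrable_subinterval(3)[OF assms(1)]
  have "m * (T - t2) * (t2 - t1) = integral {t1..t2} (\<lambda>s. m * (T - t2))" using assms by simp
  also have "\<dots> \<le> integral {t1..t2} (\<lambda>s. (T - s) * k s)"
  proof (rule integral_le)
    fix s assume s: "s \<in> {t1..t2}"
    have "m * (T - t2) \<le> k s * (T - t2)" using assms s by (intro mult_right_mono) auto
    also have "\<dots> \<le> k s * (T - s)" using assms s by (intro mult_left_mono) auto
    finally show "m * (T - t2) \<le> (T - s) * k s" by (simp add: mult.commute)
  qed (use int assms in auto)
  also have "\<dots> \<le> integral {0..T} (\<lambda>s. (T - s) * k s)"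
    using assms int by (intro integral_subset_le) auto
  finally show ?thesis unfolding second_primitive_def .
qed

lemma second_primitive_close:
  assumes "moment_integrable T k" "moment_integrable T l" "\<forall>s\<in>{0..T}. \<bar>k s - l s\<bar> \<le> e"
    and "0 \<le> t" "t \<le> T"
  shows "\<bar>second_primitive k t - second_primitive l t\<bar> \<le> T * T * e"
proof -
  note int = moment_integrable_subinterval(3)[OF _ order_refl assms(5)]
  have e: "0 \<le> e" using assms by force
  have "second_primitive k t - second_primitive l t
      = integral {0..t} (\<lambda>s. (t - s) * k s - (t - s) * l s)"
    unfolding second_primitive_def using int assms by (simp add: integral_diff)
  also have "norm \<dots> \<le> integral {0..t} (\<lambda>s. T * e)"
  proof (rule integral_norm_bound_integral)
    fix s assume s: "s \<in> {0..t}"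
    have "\<bar>(t - s) * k s - (t - s) * l s\<bar> = (t - s) * \<bar>k s - l s\<bar>"
      using s by (simp add: abs_mult flip: right_diff_distrib)
    also have "\<dots> \<le> T * e" using s assms e by (intro mult_mono) auto
    finally show "norm ((t - s) * k s - (t - s) * l s) \<le> T * e" by simp
  qed (use int assms in \<open>auto intro: integrable_diff\<close>)
  also have "\<dots> = t * (T * e)" using assms by simp
  also have "\<dots> \<le> T * (T * e)" using e assms by (intro mult_right_mono) auto
  finally show ?thesis by simp
qed

lemma second_primitive_tendsto:
  assumes "\<And>n. moment_integrable T (k n)" "moment_integrable T l"
    and "uniform_limit {0..T} k l sequentially" "0 \<le> t" "t \<le> T"
  shows "(\<lambda>n. second_primitive (k n) t) \<longlonglongrightarrow> second_primitive l t"
proof (rule LIMSEQ_I)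
  fix e :: real assume "0 < e"
  then have "0 < e / (T * T + 1)" by (simp add: add_nonneg_pos)
  then obtain N where N: "\<forall>n\<ge>N. \<forall>s\<in>{0..T}. \<bar>k n s - l s\<bar> < e / (T * T + 1)"
    using assms(3) unfolding uniform_limit_sequentially_iff dist_real_def by blast
  have "\<bar>second_primitive (k n) t - second_primitive l t\<bar> < e" if "n \<ge> N" for n
  proof -
    have "\<forall>s\<in>{0..T}. \<bar>k n s - l s\<bar> \<le> e / (T * T + 1)"
      using N that by (simp add: less_imp_le)
    then have "\<bar>second_primitive (k n) t - second_primitive l t\<bar> \<le> T * T * (e / (T * T + 1))"
      by (rule second_primitive_close[OF assms(1,2) _ assms(4,5)])
    also have "\<dots> < e"
      using \<open>0 < e\<close> add_nonneg_pos[OF zero_le_square zero_less_one, of T] by (simp add: field_simps)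
    finally show ?thesis .
  qed
  then show "\<exists>N. \<forall>n\<ge>N. norm (second_primitive (k n) t - second_primitive l t) < e" by auto
qed

lemma C2_on_second_primitive:
  assumes "continuous_on {0..T} k" and u: "\<forall>t\<in>{0..T}. u t = c - second_primitive k t"
  shows "C2_on T u (\<lambda>t. - integral {0..t} k) (\<lambda>t. - k t)"
proof -
  have sk: "continuous_on {0..T} (\<lambda>s. s * k s)" by (intro continuous_intros assms)
  have K: "((\<lambda>t. integral {0..t} k) has_real_derivative k t) (at t within {0..T})"
    and SK: "((\<lambda>t. integral {0..t} (\<lambda>s. s * k s)) has_real_derivative t * k t) (at t within {0..T})"
    if "t \<in> {0..T}" for t
    using integral_has_vector_derivative[OF assms(1) that] integral_has_vector_derivative[OF sk that]
    by (simp_all add: has_real_derivative_iff_has_vector_derivative)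
  have "(u has_real_derivative - integral {0..t} k) (at t within {0..T})" if t: "t \<in> {0..T}" for t
  proof -
    have "((\<lambda>t. c - (t * integral {0..t} k - integral {0..t} (\<lambda>s. s * k s))) has_real_derivative
        - integral {0..t} k) (at t within {0..T})"
      using K[OF t] SK[OF t] by (auto intro!: derivative_eq_intros)
    then show ?thesis unfolding has_field_derivative_def
      by (rule has_derivative_transform[OF t, rotated])
        (use u second_primitive_eq[OF moment_integrable_continuous[OF assms(1)]] in auto)
  qed
  then show ?thesis unfolding C2_on_def
    using K by (auto intro!: derivative_eq_intros continuous_intros assms(1))
qed

section \<open>Euler polygons\<close>

definition grid_cell :: "real \<Rightarrow> nat \<Rightarrow> real set" where
  "grid_cell h j = {real j * h..<real (Suc j) * h}"

text \<open>Euler polygons for \<open>u'' = - a g(u), u(0) = c, u'(0) = 0\<close> with the rate \<open>g(u)\<close> frozen on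
each grid cell at its left end point; step n+1 changes the polygon only to the right of \<open>n h\<close>.\<close>
primrec euler :: "(real \<Rightarrow> real) \<Rightarrow> (real \<Rightarrow> real) \<Rightarrow> real \<Rightarrow> real \<Rightarrow> nat \<Rightarrow> real \<Rightarrow> real" where
  "euler a g h c 0 = (\<lambda>t. c)"
| "euler a g h c (Suc n) = (\<lambda>t. euler a g h c n t
     - g (euler a g h c n (real n * h)) * second_primitive (\<lambda>s. a s * indicator (grid_cell h n) s) t)"

definition euler_rate :: "(real \<Rightarrow> real) \<Rightarrow> (real \<Rightarrow> real) \<Rightarrow> real \<Rightarrow> real \<Rightarrow> nat \<Rightarrow> real \<Rightarrow> real" where
  "euler_rate a g h c n s = (\<Sum>j<n. g (euler a g h c j (real j * h)) * indicator (grid_cell h j) s)"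

lemma moment_integrable_grid_cell:
  assumes "continuous_on {0..T} a"
  shows "moment_integrable T (\<lambda>s. a s * indicator (grid_cell h j) s)"
proof -
  have *: "(\<lambda>s. k s * indicator {l..<r} s) integrable_on {0..T}"
    if "continuous_on {0..T} k" for k :: "real \<Rightarrow> real" and l r
  proof (rule integrable_spike)
    have "k integrable_on {max l 0..min r T}"
      by (rule integrable_continuous_real, rule continuous_on_subset[OF that]) auto
    then have "k integrable_on ({l..r} \<inter> {0..T})" by (simp add: Int_atLeastAtMost)
    then show "(\<lambda>s. if s \<in> {l..r} then k s else 0) integrable_on {0..T}"
      by (simp only: integrable_restrict_Int)
    show "k s * indicator {l..<r} s = (if s \<in> {l..r} then k s else 0)" if "s \<in> {0..T} - {r}" for s
      using that by (auto simp: indicator_def)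
  qed auto
  have "continuous_on {0..T} (\<lambda>s. s * a s)" by (intro continuous_intros assms)
  from *[OF this] *[OF assms] show ?thesis
    unfolding moment_integrable_def grid_cell_def by (simp add: mult.assoc)
qed

lemma second_primitive_grid_cell_eq_0:
  assumes "t \<le> real j * h"
  shows "second_primitive (\<lambda>s. a s * indicator (grid_cell h j) s) t = 0"
proof -
  have "(t - s) * (a s * indicator (grid_cell h j) s) = 0" if "s \<in> {0..t}" for s
    using that assms by (cases "s = t") (auto simp: grid_cell_def indicator_def)
  then have "integral {0..t} (\<lambda>s. (t - s) * (a s * indicator (grid_cell h j) s)) = integral {0..t} (\<lambda>s. 0)"
    by (intro integral_cong)
  then show ?thesis unfolding second_primitive_def by simp
qed

lemma euler_Suc_eq: "t \<le> real n * h \<Longrightarrow> euler a g h c (Suc n) t = euler a g h c n t"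
  by (simp add: second_primitive_grid_cell_eq_0)

lemma euler_grid:
  assumes "0 \<le> h" "j \<le> n"
  shows "euler a g h c n (real j * h) = euler a g h c j (real j * h)"
  using assms(2)
proof (induction n)
  case (Suc n)
  show ?case
  proof (cases "j = Suc n")
    case False
    then have "real j * h \<le> real n * h" using Suc.prems assms(1) by (intro mult_right_mono) auto
    then show ?thesis using Suc False by (simp add: euler_Suc_eq del: euler.simps)
  qed simp
qed simp

lemma euler_eq_second_primitive:
  assumes "continuous_on {0..T} a"
  shows "moment_integrable T (\<lambda>s. a s * euler_rate a g h c n s)"
    and "t \<le> T \<Longrightarrow> euler a g h c n t = c - second_primitive (\<lambda>s. a s * euler_rate a g h c n s) t"
proof (induction n arbitrary: t)
  case 0
  { case 1 show ?case by (simp add: euler_rate_def moment_integrable_def integrable_0) }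
  { case 2 show ?case by (simp add: euler_rate_def second_primitive_def) }
next
  case (Suc n)
  let ?x = "g (euler a g h c n (real n * h))"
  have rate: "(\<lambda>s. a s * euler_rate a g h c (Suc n) s)
      = (\<lambda>s. a s * euler_rate a g h c n s + ?x * (a s * indicator (grid_cell h n) s))"
    by (simp add: euler_rate_def algebra_simps)
  note cell = moment_integrable_grid_cell[OF assms]
  { case 1 show ?case
      unfolding rate by (intro moment_integrable_add_scaled Suc.IH(1) cell) }
  { case 2 then show ?case
      unfolding rate using Suc.IH(2)[OF 2] by (simp add: second_primitive_add_scaled[OF Suc.IH(1) cell]) }
qed

lemma grid_floor_bounds:
  assumes "0 < h" "0 \<le> s"
  shows "0 \<le> real (nat \<lfloor>s / h\<rfloor>) * h" "real (nat \<lfloor>s / h\<rfloor>) * h \<le> s"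
    "s < real (nat \<lfloor>s / h\<rfloor>) * h + h"
proof -
  have "real (nat \<lfloor>s / h\<rfloor>) = of_int \<lfloor>s / h\<rfloor>" using assms by simp
  moreover have "of_int \<lfloor>s / h\<rfloor> \<le> s / h" "s / h < of_int \<lfloor>s / h\<rfloor> + 1" by linarith+
  ultimately show "real (nat \<lfloor>s / h\<rfloor>) * h \<le> s" "s < real (nat \<lfloor>s / h\<rfloor>) * h + h"
    using assms by (simp_all add: le_divide_eq divide_less_eq algebra_simps)
qed (use assms in simp)

lemma euler_rate_eq:
  assumes "0 < h" "0 \<le> s" "s < real n * h"
  shows "euler_rate a g h c n s = g (euler a g h c n (real (nat \<lfloor>s / h\<rfloor>) * h))"
proof -
  define i where "i = nat \<lfloor>s / h\<rfloor>"
  have cell: "s \<in> grid_cell h j \<longleftrightarrow> j = i" for j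
  proof -
    have "s \<in> grid_cell h j \<longleftrightarrow> real j \<le> s / h \<and> s / h < real j + 1"
      using assms by (auto simp: grid_cell_def field_simps)
    also have "\<dots> \<longleftrightarrow> \<lfloor>s / h\<rfloor> = int j" by (simp add: floor_eq_iff)
    also have "\<dots> \<longleftrightarrow> j = i" unfolding i_def using assms by auto
    finally show ?thesis .
  qed
  have "real i * h < real n * h" using grid_floor_bounds(2)[OF assms(1,2)] assms(3) unfolding i_def by linarith
  then have "i < n" using assms(1) by simp
  then have "euler_rate a g h c n s = g (euler a g h c i (real i * h))"
    unfolding euler_rate_def indicator_def cell by (simp add: if_distrib cong: if_cong)
  also have "\<dots> = g (euler a g h c n (real i * h))"
    using euler_grid[of h i n] assms \<open>i < n\<close> by simp
  finally show ?thesis unfolding i_def .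
qed

lemma continuous_on_euler:
  assumes "continuous_on {0..T} a"
  shows "continuous_on {0..T} (euler a g h c n)"
proof -
  have "continuous_on {0..T} (\<lambda>t. c - second_primitive (\<lambda>s. a s * euler_rate a g h c n s) t)"
    by (intro continuous_intros continuous_on_second_primitive euler_eq_second_primitive(1) assms)
  then show ?thesis by (rule continuous_on_eq) (simp add: euler_eq_second_primitive(2)[OF assms])
qed

lemma continuous_euler_initial:
  assumes "continuous_on UNIV g"
  shows "continuous_on UNIV (\<lambda>c. euler a g h c n t)"
proof (induction n arbitrary: t)
  case (Suc n)
  show ?case
    unfolding euler.simps by (intro continuous_intros Suc continuous_on_compose2[OF assms Suc]) simp
qed simp

lemma continuous_euler_integral_initial:
  assumes "continuous_on UNIV g" "continuous_on {0..T} a" "b \<le> T"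
  shows "continuous_on UNIV (\<lambda>c. integral {0..b} (euler a g h c n))"
proof (induction n)
  case (Suc n)
  let ?w = "second_primitive (\<lambda>s. a s * indicator (grid_cell h n) s)"
  have sub: "{0..b} \<subseteq> {0..T}" using assms(3) by auto
  have int: "euler a g h c n integrable_on {0..b}" "?w integrable_on {0..b}" for c
    using continuous_on_subset[OF continuous_on_euler[OF assms(2)] sub]
      continuous_on_subset[OF continuous_on_second_primitive[OF moment_integrable_grid_cell[OF assms(2)]] sub]
    by (auto intro: integrable_continuous_real)
  have "integral {0..b} (euler a g h c (Suc n))
      = integral {0..b} (euler a g h c n) - g (euler a g h c n (real n * h)) * integral {0..b} ?w" for c
    using int by (simp add: integral_diff integrable_on_mult_right)
  then show ?case
    by (simp only:) (intro continuous_intros Suc continuous_on_compose2[OF assms(1) continuous_euler_initial[OF assms(1)]] subset_UNIV)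
qed simp

lemma IVT_opposite_signs:
  fixes B :: "real \<Rightarrow> real"
  assumes "continuous_on {x..y} B" "x \<le> y" "B x * B y \<le> 0"
  shows "\<exists>z\<in>{x..y}. B z = 0"
proof -
  consider "B x \<le> 0" "0 \<le> B y" | "0 \<le> B x" "B y \<le> 0"
    using assms(3) by (auto simp: mult_le_0_iff)
  then show ?thesis
    using IVT'[of B x 0 y] IVT2'[of B y 0 x] assms(1,2) by cases auto
qed

lemma equilipschitz_convergent_subsequence:
  fixes F :: "nat \<Rightarrow> real \<Rightarrow> real"
  assumes "compact S" "\<And>n t. t \<in> S \<Longrightarrow> \<bar>F n t\<bar> \<le> R"
    and "\<And>n t t'. t \<in> S \<Longrightarrow> t' \<in> S \<Longrightarrow> \<bar>F n t - F n t'\<bar> \<le> L * \<bar>t - t'\<bar>"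
  obtains r v where "strict_mono r" "continuous_on S v" "uniform_limit S (F \<circ> r) v sequentially"
proof -
  have equicont: "\<exists>d>0. \<forall>n t'. t' \<in> S \<and> norm (t - t') < d \<longrightarrow> norm (F n t - F n t') < e"
    if "t \<in> S" "0 < e" for t e
  proof (intro exI conjI allI impI)
    show "0 < e / (\<bar>L\<bar> + 1)" using \<open>0 < e\<close> by simp
    fix n t' assume t': "t' \<in> S \<and> norm (t - t') < e / (\<bar>L\<bar> + 1)"
    have "\<bar>F n t - F n t'\<bar> \<le> L * \<bar>t - t'\<bar>" using assms(3)[OF that(1)] t' by blast
    also have "\<dots> \<le> \<bar>L\<bar> * \<bar>t - t'\<bar>" by (simp add: mult_right_mono)
    also have "\<dots> \<le> (\<bar>L\<bar> + 1) * \<bar>t - t'\<bar>" by (simp add: algebra_simps)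
    also have "\<dots> < e"
      using mult_strict_left_mono[of "\<bar>t - t'\<bar>" "e / (\<bar>L\<bar> + 1)" "\<bar>L\<bar> + 1"] t' by simp
    finally show "norm (F n t - F n t') < e" by simp
  qed
  obtain v and r :: "nat \<Rightarrow> nat" where v: "continuous_on S v" and r: "strict_mono r"
    and conv: "\<And>e. 0 < e \<Longrightarrow> \<exists>N. \<forall>n t. N \<le> n \<and> t \<in> S \<longrightarrow> norm (F (r n) t - v t) < e"
    by (rule Arzela_Ascoli[OF assms(1), of F R]) (use assms(2) in simp, use equicont in blast, blast)
  have "uniform_limit S (F \<circ> r) v sequentially"
    unfolding uniform_limit_sequentially_iff
  proof (intro allI impI)
    fix e :: real assume "0 < e"
    then obtain N where "\<forall>n t. N \<le> n \<and> t \<in> S \<longrightarrow> norm (F (r n) t - v t) < e" using conv by blast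
    then show "\<exists>N. \<forall>n\<ge>N. \<forall>t\<in>S. dist ((F \<circ> r) n t) (v t) < e" by (auto simp: dist_norm)
  qed
  with r v show thesis by (rule that)
qed

lemma uniform_limit_delayed:
  fixes F :: "nat \<Rightarrow> real \<Rightarrow> real"
  assumes lim: "uniform_limit S F v sequentially"
    and lip: "\<And>n t t'. t \<in> S \<Longrightarrow> t' \<in> S \<Longrightarrow> \<bar>F n t - F n t'\<bar> \<le> L * \<bar>t - t'\<bar>"
    and delay: "\<And>n s. s \<in> S \<Longrightarrow> p n s \<in> S \<and> \<bar>s - p n s\<bar> \<le> d n" and "d \<longlonglongrightarrow> 0"
  shows "uniform_limit S (\<lambda>n s. F n (p n s)) v sequentially"
  unfolding uniform_limit_sequentially_iff
proof (intro allI impI)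
  fix e :: real assume "0 < e"
  then have "\<exists>N. \<forall>n\<ge>N. \<forall>s\<in>S. dist (F n s) (v s) < e / 2"
    using lim half_gt_zero unfolding uniform_limit_sequentially_iff by blast
  then obtain N1 where N1: "\<forall>n\<ge>N1. \<forall>s\<in>S. dist (F n s) (v s) < e / 2" by blast
  have "(\<lambda>n. \<bar>L\<bar> * d n) \<longlonglongrightarrow> 0" by (rule tendsto_mult_right_zero[OF \<open>d \<longlonglongrightarrow> 0\<close>])
  then obtain N2 where N2: "\<forall>n\<ge>N2. norm (\<bar>L\<bar> * d n - 0) < e / 2"
    using LIMSEQ_D \<open>0 < e\<close> half_gt_zero by blast
  have "dist (F n (p n s)) (v s) < e" if n: "n \<ge> max N1 N2" and s: "s \<in> S" for n s
  proof -
    have "\<bar>F n (p n s) - F n s\<bar> \<le> L * \<bar>p n s - s\<bar>" using lip delay s by blast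
    also have "\<dots> \<le> \<bar>L\<bar> * \<bar>p n s - s\<bar>" by (simp add: mult_right_mono)
    also have "\<dots> \<le> \<bar>L\<bar> * d n" using delay[OF s] by (simp add: abs_minus_commute mult_left_mono)
    finally have "\<bar>F n (p n s) - F n s\<bar> < e / 2" using N2 n by auto
    moreover have "\<bar>F n s - v s\<bar> < e / 2" using N1 n s by (auto simp: dist_real_def)
    ultimately show ?thesis unfolding dist_real_def by linarith
  qed
  then show "\<exists>N. \<forall>n\<ge>N. \<forall>s\<in>S. dist (F n (p n s)) (v s) < e" by blast
qed

lemma uniform_limit_delayed_compose:
  fixes F :: "nat \<Rightarrow> real \<Rightarrow> real"
  assumes lim: "uniform_limit S F v sequentially"
    and lip: "\<And>n t t'. t \<in> S \<Longrightarrow> t' \<in> S \<Longrightarrow> \<bar>F n t - F n t'\<bar> \<le> L * \<bar>t - t'\<bar>"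
    and delay: "\<And>n s. s \<in> S \<Longrightarrow> p n s \<in> S \<and> \<bar>s - p n s\<bar> \<le> d n" and d: "d \<longlonglongrightarrow> 0"
    and bound: "\<And>n t. t \<in> S \<Longrightarrow> \<bar>F n t\<bar> \<le> R" and g: "continuous_on {-R..R} g"
  shows "uniform_limit S (\<lambda>n s. g (F n (p n s))) (\<lambda>s. g (v s)) sequentially"
proof (rule uniform_limit_compose_uniformly_continuous_on[OF uniform_limit_delayed[OF lim lip delay d]])
  show "uniformly_continuous_on {-R..R} g" by (rule compact_uniformly_continuous[OF g compact_Icc])
  have "F n (p n s) \<in> {-R..R}" if "s \<in> S" for n s
    using bound[of "p n s" n] delay[OF that] by (simp add: abs_le_iff)
  then show "\<forall>\<^sub>F n in sequentially. \<forall>s\<in>S. F n (p n s) \<in> {-R..R}" by (simp add: always_eventually)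
qed auto

lemma tendsto_integral_uniform_limit:
  fixes F :: "nat \<Rightarrow> real \<Rightarrow> real"
  assumes "uniform_limit {a..b} F v sequentially" "\<And>n. continuous_on {a..b} (F n)"
  shows "(\<lambda>n. integral {a..b} (F n)) \<longlonglongrightarrow> integral {a..b} v"
proof -
  obtain I J where I: "\<And>n. (F n has_integral I n) {a..b}" and J: "(v has_integral J) {a..b}"
    and IJ: "I \<longlonglongrightarrow> J"
    by (rule uniform_limit_integral[OF assms]) (simp, rule that)
  then show ?thesis using integral_unique[OF I] integral_unique[OF J] by simp
qed

lemma sublinear_at_0_imp_zero:
  fixes f :: "real \<Rightarrow> real"
  assumes "continuous_on {0..} f" "((\<lambda>x. f x / x) \<longlongrightarrow> 0) (at_right 0)"
  shows "f 0 = 0"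
proof -
  have "(f \<longlongrightarrow> f 0) (at 0 within {0..})"
    using assms(1) unfolding continuous_on_def by simp
  then have f0: "(f \<longlongrightarrow> f 0) (at_right 0)"
    by (rule tendsto_within_subset) auto
  have "((\<lambda>x. f x / x * x) \<longlongrightarrow> 0 * 0) (at_right 0)"
    by (intro tendsto_mult assms(2) tendsto_ident_at)
  moreover have "\<forall>\<^sub>F x in at_right 0. f x / x * x = f x"
    by (rule eventually_at_rightI[of 0 1]) auto
  ultimately have "(f \<longlongrightarrow> 0) (at_right 0)"
    by (auto intro: Lim_transform_eventually)
  then show ?thesis using tendsto_unique[OF trivial_limit_at_right_real f0] by blast
qed

lemma eventually_le_mult_if_tendsto_0:
  fixes f :: "real \<Rightarrow> real"
  assumes "((\<lambda>x. f x / x) \<longlongrightarrow> 0) F" "eventually (\<lambda>x. 0 < x) F" "0 < \<epsilon>"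
  shows "eventually (\<lambda>x. f x \<le> \<epsilon> * x) F"
  using tendstoD[OF assms(1,3)] assms(2)
  by eventually_elim (auto simp: dist_real_def abs_less_iff divide_less_eq)

lemma eventually_ge_mult_if_filterlim_at_top:
  fixes f :: "real \<Rightarrow> real"
  assumes "filterlim (\<lambda>x. f x / x) at_top F" "eventually (\<lambda>x. 0 < x) F"
  shows "eventually (\<lambda>x. M * x \<le> f x) F"
  using assms(1)[unfolded filterlim_at_top, rule_format, of M] assms(2)
  by eventually_elim (simp add: le_divide_eq)

lemma integral_affine:
  fixes p q e :: real
  assumes "0 \<le> e"
  shows "integral {0..e} (\<lambda>t. p - q * t) = p * e - q * e\<^sup>2 / 2"
proof -
  have "((\<lambda>t. p - q * t) has_integral (p * e - q * e\<^sup>2 / 2) - (p * 0 - q * 0\<^sup>2 / 2)) {0..e}"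
  proof (rule fundamental_theorem_of_calculus[OF assms])
    fix x assume "x \<in> {0..e}"
    show "((\<lambda>t. p * t - q * t\<^sup>2 / 2) has_vector_derivative (p - q * x)) (at x within {0..e})"
      by (auto intro!: derivative_eq_intros simp: power2_eq_square has_real_derivative_iff_has_vector_derivative[symmetric])
  qed
  then show ?thesis by (simp add: integral_unique)
qed

section \<open>Lagged solutions\<close>

locale bvp =
  fixes T \<eta> \<alpha> A :: real and a f :: "real \<Rightarrow> real"
  assumes T_pos: "0 < T" and eta: "0 < \<eta>" "\<eta> < T" and alpha: "0 < \<alpha>" "\<alpha> * \<eta> < 1"
    and a_bounds: "\<forall>t\<in>{0..T}. 0 \<le> a t \<and> a t \<le> A" and a_cont: "continuous_on {0..T} a"
    and a_pos: "\<exists>t0\<in>{0..T}. 0 < a t0"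
    and f_cont: "continuous_on {0..} f" and f_nonneg: "\<forall>x\<ge>0. 0 \<le> f x"
begin

definition defect :: "(real \<Rightarrow> real) \<Rightarrow> real" where
  "defect u = u T - \<alpha> * integral {0..\<eta>} u"

text \<open>For \<open>d = 0\<close> this is a solution of the differential equation; Euler polygons are
lagged by their step size.\<close>
definition lagged_solution :: "real \<Rightarrow> real \<Rightarrow> (real \<Rightarrow> real) \<Rightarrow> (real \<Rightarrow> real) \<Rightarrow> bool" where
  "lagged_solution d c \<sigma> u \<longleftrightarrow> moment_integrable T (\<lambda>s. a s * \<sigma> s)
     \<and> (\<forall>t\<in>{0..T}. u t = c - second_primitive (\<lambda>s. a s * \<sigma> s) t)
     \<and> (\<forall>s\<in>{0..T}. \<exists>q\<in>{0..s}. s - q \<le> d \<and> \<sigma> s = f (max (u q) 0))"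

lemma A_nonneg: "0 \<le> A"
  using a_bounds T_pos by force

lemma continuous_f_max0: "continuous_on UNIV (\<lambda>x. f (max x 0))"
  by (rule continuous_on_compose2[OF f_cont]) (auto intro: continuous_intros)

lemma f_bounded:
  obtains B where "0 \<le> B" "\<forall>x\<in>{0..X}. f x \<le> B"
proof -
  have "compact (f ` {0..X})"
    using continuous_on_subset[OF f_cont] by (intro compact_continuous_image) auto
  then obtain B where "\<forall>y\<in>f ` {0..X}. norm y \<le> B" using compact_imp_bounded bounded_iff by metis
  then show thesis using that[of "max B 0"] by force
qed

context
  fixes d c :: real and \<sigma> u :: "real \<Rightarrow> real"
  assumes sol: "lagged_solution d c \<sigma> u" and c_pos: "0 < c"
begin

lemma lagged_kernel_integrable: "moment_integrable T (\<lambda>s. a s * \<sigma> s)"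
  using sol unfolding lagged_solution_def by blast

lemma lagged_eq: "t \<in> {0..T} \<Longrightarrow> u t = c - second_primitive (\<lambda>s. a s * \<sigma> s) t"
  using sol unfolding lagged_solution_def by blast

lemma lagged_rate: "s \<in> {0..T} \<Longrightarrow> \<exists>q\<in>{0..s}. s - q \<le> d \<and> \<sigma> s = f (max (u q) 0)"
  using sol unfolding lagged_solution_def by blast

lemma lagged_at_0: "u 0 = c"
  using lagged_eq T_pos by simp

lemma lagged_rate_nonneg: "s \<in> {0..T} \<Longrightarrow> 0 \<le> \<sigma> s"
  using lagged_rate f_nonneg by fastforce

lemma lagged_kernel_nonneg: "\<forall>s\<in>{0..T}. 0 \<le> a s * \<sigma> s"
  using lagged_rate_nonneg a_bounds by simp

lemma lagged_le_initial: "t \<in> {0..T} \<Longrightarrow> u t \<le> c"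
  using lagged_eq second_primitive_nonneg[OF lagged_kernel_integrable lagged_kernel_nonneg] by force

lemma lagged_rate_le:
  assumes "\<forall>x\<in>{0..c}. f x \<le> B" "s \<in> {0..T}"
  shows "\<sigma> s \<le> B"
proof -
  obtain q where q: "q \<in> {0..s}" "\<sigma> s = f (max (u q) 0)" using lagged_rate assms(2) by blast
  then have "max (u q) 0 \<in> {0..c}" using lagged_le_initial[of q] assms(2) c_pos by auto
  then show ?thesis using q assms(1) by simp
qed

lemma lagged_kernel_bounds:
  assumes "\<forall>x\<in>{0..c}. f x \<le> B"
  shows "\<forall>s\<in>{0..T}. 0 \<le> a s * \<sigma> s \<and> a s * \<sigma> s \<le> A * B"
proof (intro ballI conjI)
  fix s assume s: "s \<in> {0..T}"
  show "0 \<le> a s * \<sigma> s" using lagged_kernel_nonneg s by blast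
  show "a s * \<sigma> s \<le> A * B"
    using a_bounds s lagged_rate_le[OF assms s] lagged_rate_nonneg[OF s] by (intro mult_mono) auto
qed

lemma lagged_antimono_lipschitz:
  assumes "\<forall>x\<in>{0..c}. f x \<le> B" "0 \<le> t" "t \<le> t'" "t' \<le> T"
  shows "u t' \<le> u t" "u t - u t' \<le> 2 * T * (A * B) * (t' - t)"
  using second_primitive_mono_lipschitz[OF lagged_kernel_integrable lagged_kernel_bounds[OF assms(1)] assms(2-4)]
    lagged_eq[of t] lagged_eq[of t'] assms(2-4) by auto

lemma lagged_antimono: "0 \<le> t \<Longrightarrow> t \<le> t' \<Longrightarrow> t' \<le> T \<Longrightarrow> u t' \<le> u t"
  using f_bounded[of c] lagged_antimono_lipschitz(1) by blast

lemma lagged_continuous: "continuous_on {0..T} u"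
proof -
  have "continuous_on {0..T} (\<lambda>t. c - second_primitive (\<lambda>s. a s * \<sigma> s) t)"
    by (intro continuous_intros continuous_on_second_primitive lagged_kernel_integrable)
  then show ?thesis by (rule continuous_on_eq) (simp add: lagged_eq)
qed

lemma lagged_chord:
  assumes "t \<in> {0..T}"
  shows "c - t * ((c - u T) / T) \<le> u t"
proof -
  have "T * (c - u t) \<le> t * (c - u T)"
    using second_primitive_chord[OF lagged_kernel_integrable lagged_kernel_nonneg, of t]
      lagged_eq[of t] lagged_eq[of T] T_pos assms by auto
  then show ?thesis using T_pos by (simp add: field_simps)
qed

lemma lagged_integrable: "u integrable_on {0..\<eta>}"
  using lagged_continuous eta
  by (intro integrable_continuous_real) (auto elim: continuous_on_subset)

section \<open>The sign of the defect\<close>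

text \<open>Concavity puts \<open>u\<close> above its chord from \<open>(0, c)\<close> to \<open>(T, u T)\<close>, whose mean over \<open>[0,\<eta>]\<close>
is \<open>c - (c - u T) \<eta> / (2 T)\<close>; since \<open>\<alpha> \<eta> < 1\<close> a nonnegative defect then forces \<open>u T > 0\<close>.\<close>
lemma defect_nonneg_imp_end_pos:
  assumes "0 \<le> defect u"
  shows "0 < u T"
proof -
  define D where "D = c - u T"
  have "integral {0..\<eta>} (\<lambda>t. c - (D / T) * t) \<le> integral {0..\<eta>} u"
  proof (rule integral_le)
    fix t assume "t \<in> {0..\<eta>}"
    then show "c - D / T * t \<le> u t"
      using lagged_chord[of t] eta unfolding D_def by (auto simp: mult.commute)
  qed (use lagged_integrable T_pos in \<open>auto intro!: integrable_continuous_real continuous_intros\<close>)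
  then have "\<alpha> * (c * \<eta> - (D / T) * \<eta>\<^sup>2 / 2) \<le> \<alpha> * integral {0..\<eta>} u"
    using integral_affine[of \<eta> c "D / T"] eta alpha by (intro mult_left_mono) auto
  also have "\<dots> \<le> c - D" using assms unfolding defect_def D_def by simp
  finally have key: "D * (1 - \<alpha> * (\<eta>\<^sup>2 / (2 * T))) \<le> c * (1 - \<alpha> * \<eta>)"
    using T_pos by (simp add: field_simps)
  have q: "\<alpha> * (\<eta>\<^sup>2 / (2 * T)) < \<alpha> * \<eta>"
    using eta alpha by (intro mult_strict_left_mono) (auto simp: power2_eq_square field_simps)
  then have "c * (1 - \<alpha> * \<eta>) < c * (1 - \<alpha> * (\<eta>\<^sup>2 / (2 * T)))"
    using c_pos by (intro mult_strict_left_mono) auto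
  with key have "D * (1 - \<alpha> * (\<eta>\<^sup>2 / (2 * T))) < c * (1 - \<alpha> * (\<eta>\<^sup>2 / (2 * T)))"
    by linarith
  then have "D < c" by (rule mult_right_less_imp_less) (use q alpha in linarith)
  then show ?thesis unfolding D_def by simp
qed

lemma defect_pos_if_sublinear:
  assumes "\<forall>x\<in>{0..c}. f x \<le> B" "2 * T * T * A * B < (1 - \<alpha> * \<eta>) * c"
  shows "0 < defect u"
proof -
  have "u 0 - u T \<le> 2 * T * (A * B) * (T - 0)"
    using lagged_antimono_lipschitz(2)[OF assms(1), of 0 T] T_pos by simp
  then have end_bound: "c - 2 * T * T * A * B \<le> u T"
    using lagged_at_0 by (simp add: algebra_simps)
  have "integral {0..\<eta>} u \<le> integral {0..\<eta>} (\<lambda>t. c)"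
    using lagged_integrable lagged_le_initial eta by (intro integral_le) auto
  then have "\<alpha> * integral {0..\<eta>} u \<le> \<alpha> * (\<eta> * c)"
    using eta alpha by (intro mult_left_mono) auto
  then show ?thesis using end_bound assms(2) unfolding defect_def by (simp add: algebra_simps)
qed

lemma defect_neg_if_superlinear:
  assumes t12: "0 \<le> t1" "t1 < t2" "t2 < T" and a0: "\<forall>s\<in>{t1..t2}. a0 \<le> a s" "0 \<le> a0"
    and M: "0 \<le> M" "c < M * ((1 - t2 / T) * c) * a0 * (T - t2) * (t2 - t1)"
    and f_ge: "\<forall>x\<in>{(1 - t2 / T) * c..c}. M * x \<le> f x"
  shows "defect u < 0"
proof (rule ccontr)
  assume "\<not> defect u < 0"
  then have uT: "0 < u T" using defect_nonneg_imp_end_pos by simp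
  define m where "m = (1 - t2 / T) * c"
  have m: "0 < m" unfolding m_def using t12 c_pos T_pos by (simp add: field_simps)
  have "a0 * (M * m) \<le> a s * \<sigma> s" if s: "s \<in> {t1..t2}" for s
  proof -
    have sT: "s \<in> {0..T}" using s t12 by auto
    obtain q where q: "q \<in> {0..s}" "\<sigma> s = f (max (u q) 0)" using lagged_rate[OF sT] by blast
    have "0 \<le> (c - u T) / T" using lagged_le_initial[of T] T_pos by simp
    then have "s * ((c - u T) / T) \<le> t2 * (c / T)"
      using uT sT s T_pos c_pos by (intro mult_mono divide_right_mono) auto
    then have "m \<le> u q"
      using lagged_antimono[of q s] lagged_chord[OF sT] q sT
      unfolding m_def by (simp add: algebra_simps)
    moreover have "u q \<le> c" using lagged_le_initial q sT by simp
    ultimately have "M * m \<le> M * u q" "M * u q \<le> \<sigma> s"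
      using f_ge q m M(1) by (auto simp: m_def intro: mult_left_mono)
    then have "M * m \<le> \<sigma> s" by linarith
    then show ?thesis using a0 s M(1) m a_bounds sT by (intro mult_mono) auto
  qed
  then have "a0 * (M * m) * (T - t2) * (t2 - t1) \<le> second_primitive (\<lambda>s. a s * \<sigma> s) T"
    using second_primitive_lower_bound[OF lagged_kernel_integrable
        lagged_kernel_nonneg t12(1)] t12 by auto
  then have "c < second_primitive (\<lambda>s. a s * \<sigma> s) T" using M(2) unfolding m_def by (simp add: algebra_simps)
  then show False using lagged_eq[of T] uT T_pos by auto
qed

end

lemma a_pos_interval:
  obtains t1 t2 a0 where "0 \<le> t1" "t1 < t2" "t2 < T" "0 < a0" "\<forall>s\<in>{t1..t2}. a0 \<le> a s"
proof -
  obtain t0 where t0: "t0 \<in> {0..T}" "0 < a t0" using a_pos by blast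
  then obtain r where r: "0 < r" "\<forall>s\<in>{0..T}. dist s t0 < r \<longrightarrow> dist (a s) (a t0) < a t0 / 2"
    using a_cont unfolding continuous_on_iff by (metis half_gt_zero)
  define e where "e = min (r / 2) (T / 2)"
  have e: "0 < e" "e \<le> r / 2" "e \<le> T / 2" using r T_pos unfolding e_def by auto
  show thesis
  proof
    show "0 \<le> max 0 (t0 - e)" "max 0 (t0 - e) < max 0 (t0 - e) + e / 2"
      "max 0 (t0 - e) + e / 2 < T" "0 < a t0 / 2"
      using e t0 by auto
    show "\<forall>s\<in>{max 0 (t0 - e)..max 0 (t0 - e) + e / 2}. a t0 / 2 \<le> a s"
    proof
      fix s assume s: "s \<in> {max 0 (t0 - e)..max 0 (t0 - e) + e / 2}"
      then have "s \<in> {0..T}" "dist s t0 < r" using t0 e by (auto simp: dist_real_def)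
      then have "dist (a s) (a t0) < a t0 / 2" using r by blast
      then show "a t0 / 2 \<le> a s" unfolding dist_real_def by arith
    qed
  qed
qed

text \<open>On \<open>[t1,t2]\<close>, where \<open>a \<ge> a0 > 0\<close>, a lagged solution with \<open>u T \<ge> 0\<close> stays in
\<open>[\<delta> c, c]\<close> by concavity; a large enough slope M of f there pushes \<open>u T\<close> below zero.\<close>
lemma superlinear_threshold:
  obtains \<delta> M where "0 < \<delta>" "\<delta> \<le> 1"
    "\<And>d c \<sigma> u. lagged_solution d c \<sigma> u \<Longrightarrow> 0 < c \<Longrightarrow> \<forall>x\<in>{\<delta> * c..c}. M * x \<le> f x \<Longrightarrow> defect u < 0"
proof -
  obtain t1 t2 a0 where t12: "0 \<le> t1" "t1 < t2" "t2 < T" and a0: "0 < a0" "\<forall>s\<in>{t1..t2}. a0 \<le> a s"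
    by (rule a_pos_interval)
  define \<delta> where "\<delta> = 1 - t2 / T"
  define P where "P = a0 * (T - t2) * (t2 - t1)"
  have \<delta>: "0 < \<delta>" "\<delta> \<le> 1" unfolding \<delta>_def using t12 T_pos by (auto simp: field_simps)
  have P: "0 < P" unfolding P_def using t12 a0 by simp
  show thesis
  proof (rule that[OF \<delta>, of "2 / (\<delta> * P)"])
    fix d c \<sigma> u assume sol: "lagged_solution d c \<sigma> u" and c: "0 < c"
      and f_ge: "\<forall>x\<in>{\<delta> * c..c}. 2 / (\<delta> * P) * x \<le> f x"
    have "2 / (\<delta> * P) * (\<delta> * c) * a0 * (T - t2) * (t2 - t1) = 2 / (\<delta> * P) * (\<delta> * P) * c"
      unfolding P_def by (simp only: mult_ac)
    also have "\<dots> = 2 * c" using \<delta> P by simp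
    finally have "2 / (\<delta> * P) * (\<delta> * c) * a0 * (T - t2) * (t2 - t1) = 2 * c" .
    then show "defect u < 0"
      using defect_neg_if_superlinear[OF sol c t12 a0(2) less_imp_le[OF a0(1)], of "2 / (\<delta> * P)"]
        f_ge \<delta> P c unfolding \<delta>_def by simp
  qed
qed

lemma sublinear_threshold:
  obtains \<epsilon> where "0 < \<epsilon>"
    "\<And>d c \<sigma> u C. lagged_solution d c \<sigma> u \<Longrightarrow> 0 < c \<Longrightarrow> \<forall>x\<in>{0..c}. f x \<le> \<epsilon> * x + C
      \<Longrightarrow> 4 * T * T * A * C < (1 - \<alpha> * \<eta>) * c \<Longrightarrow> 0 < defect u"
proof -
  define K where "K = T * T * A"
  have K: "0 \<le> K" unfolding K_def using A_nonneg by simp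
  define \<epsilon> where "\<epsilon> = (1 - \<alpha> * \<eta>) / (4 * K + 1)"
  have \<epsilon>: "0 < \<epsilon>" "\<epsilon> * (4 * K + 1) = 1 - \<alpha> * \<eta>" unfolding \<epsilon>_def using alpha K by auto
  show thesis
  proof (rule that[OF \<epsilon>(1)])
    fix d c \<sigma> u C assume sol: "lagged_solution d c \<sigma> u" and c: "0 < c"
      and f_le: "\<forall>x\<in>{0..c}. f x \<le> \<epsilon> * x + C" and C: "4 * T * T * A * C < (1 - \<alpha> * \<eta>) * c"
    have "\<forall>x\<in>{0..c}. f x \<le> \<epsilon> * c + C"
      using f_le \<epsilon>(1) by (auto intro: order_trans[OF _ add_right_mono[OF mult_left_mono]])
    moreover have "2 * T * T * A * (\<epsilon> * c + C) < (1 - \<alpha> * \<eta>) * c"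
    proof -
      have "(1 - \<alpha> * \<eta>) * c = 4 * K * \<epsilon> * c + \<epsilon> * c"
        by (simp add: \<epsilon>(2)[symmetric] algebra_simps)
      then have "4 * K * \<epsilon> * c \<le> (1 - \<alpha> * \<eta>) * c" using \<epsilon>(1) c by simp
      then show ?thesis using C unfolding K_def by (simp add: algebra_simps)
    qed
    ultimately show "0 < defect u" by (rule defect_pos_if_sublinear[OF sol c])
  qed
qed

definition opposite_defects :: "real \<Rightarrow> real \<Rightarrow> bool" where
  "opposite_defects c1 c2 \<longleftrightarrow> (\<forall>d \<sigma> u d' \<sigma>' u'. lagged_solution d c1 \<sigma> u \<longrightarrow> lagged_solution d' c2 \<sigma>' u'
     \<longrightarrow> defect u * defect u' < 0)"

lemma opposite_defectsI:
  assumes "\<And>d \<sigma> u. lagged_solution d c1 \<sigma> u \<Longrightarrow> 0 < defect u"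
    and "\<And>d \<sigma> u. lagged_solution d c2 \<sigma> u \<Longrightarrow> defect u < 0"
  shows "opposite_defects c1 c2" "opposite_defects c2 c1"
  unfolding opposite_defects_def using assms by (meson mult_pos_neg mult_neg_pos)+

lemma sublinear_at_0_bound:
  assumes "((\<lambda>x. f x / x) \<longlongrightarrow> 0) (at_right 0)" "0 < \<epsilon>"
  obtains b where "0 < b" "\<forall>x\<in>{0..b}. f x \<le> \<epsilon> * x"
proof -
  obtain b where b: "0 < b" "\<forall>x>0. x < b \<longrightarrow> f x \<le> \<epsilon> * x"
    using eventually_le_mult_if_tendsto_0[OF assms(1) eventually_at_right_less assms(2)]
    unfolding eventually_at_right_field by blast
  have "f x \<le> \<epsilon> * x" if "x \<in> {0..b / 2}" for x
    using b that sublinear_at_0_imp_zero[OF f_cont assms(1)] by (cases "x = 0") auto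
  with b(1) show thesis by (intro that[of "b / 2"]) auto
qed

lemma superlinear_at_0_bound:
  assumes "filterlim (\<lambda>x. f x / x) at_top (at_right 0)"
  obtains b where "0 < b" "\<forall>x\<in>{0<..b}. M * x \<le> f x"
proof -
  obtain b where b: "0 < b" "\<forall>x>0. x < b \<longrightarrow> M * x \<le> f x"
    using eventually_ge_mult_if_filterlim_at_top[OF assms eventually_at_right_less]
    unfolding eventually_at_right_field by blast
  then show thesis by (intro that[of "b / 2"]) auto
qed

lemma sublinear_at_top_bound:
  assumes "((\<lambda>x. f x / x) \<longlongrightarrow> 0) at_top" "0 < \<epsilon>"
  obtains C where "0 \<le> C" "\<forall>x\<ge>0. f x \<le> \<epsilon> * x + C"
proof -
  obtain X where X: "\<forall>x\<ge>X. f x \<le> \<epsilon> * x"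
    using eventually_le_mult_if_tendsto_0[OF assms(1) eventually_gt_at_top assms(2)]
    unfolding eventually_at_top_linorder by blast
  obtain C where C: "0 \<le> C" "\<forall>x\<in>{0..X}. f x \<le> C" by (rule f_bounded)
  have "f x \<le> \<epsilon> * x + C" if "0 \<le> x" for x
  proof (cases "x \<le> X")
    case True
    then show ?thesis using C that assms(2) by (auto intro: add_increasing)
  next
    case False
    then show ?thesis using X C by (auto intro: add_increasing2)
  qed
  with C(1) show thesis by (intro that) auto
qed

lemma superlinear_at_top_bound:
  assumes "filterlim (\<lambda>x. f x / x) at_top at_top"
  obtains X where "\<forall>x\<ge>X. M * x \<le> f x"
proof -
  have "eventually (\<lambda>x. M * x \<le> f x) at_top"
    by (rule eventually_ge_mult_if_filterlim_at_top[OF assms eventually_gt_at_top])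
  then show thesis unfolding eventually_at_top_linorder by (auto intro: that)
qed

lemma opposite_defects_if_sublinear_at_0:
  assumes "((\<lambda>x. f x / x) \<longlongrightarrow> 0) (at_right 0)" "filterlim (\<lambda>x. f x / x) at_top at_top"
  shows "\<exists>c1 c2. 0 < c1 \<and> c1 < c2 \<and> opposite_defects c1 c2"
proof -
  obtain \<epsilon> where \<epsilon>: "0 < \<epsilon>" and pos: "\<And>d c \<sigma> u C. lagged_solution d c \<sigma> u \<Longrightarrow> 0 < c
      \<Longrightarrow> \<forall>x\<in>{0..c}. f x \<le> \<epsilon> * x + C \<Longrightarrow> 4 * T * T * A * C < (1 - \<alpha> * \<eta>) * c \<Longrightarrow> 0 < defect u"
    by (rule sublinear_threshold) (rule that)
  obtain \<delta> M where \<delta>: "0 < \<delta>" and neg: "\<And>d c \<sigma> u. lagged_solution d c \<sigma> u \<Longrightarrow> 0 < c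
      \<Longrightarrow> \<forall>x\<in>{\<delta> * c..c}. M * x \<le> f x \<Longrightarrow> defect u < 0"
    by (rule superlinear_threshold) (rule that)
  obtain c1 where c1: "0 < c1" "\<forall>x\<in>{0..c1}. f x \<le> \<epsilon> * x"
    by (rule sublinear_at_0_bound[OF assms(1) \<epsilon>])
  then have small: "0 < defect u" if "lagged_solution d c1 \<sigma> u" for d \<sigma> u
    using pos[OF that c1(1), of 0] alpha by simp
  obtain X where X: "\<forall>x\<ge>X. M * x \<le> f x" by (rule superlinear_at_top_bound[OF assms(2)])
  define c2 where "c2 = max (c1 + 1) (\<bar>X\<bar> / \<delta>)"
  have c2: "c1 < c2" unfolding c2_def by simp
  have "\<bar>X\<bar> / \<delta> \<le> c2" unfolding c2_def by simp
  then have "X \<le> \<delta> * c2" using \<delta> by (simp add: pos_divide_le_eq mult.commute)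
  then have large: "defect u < 0" if "lagged_solution d c2 \<sigma> u" for d \<sigma> u
    using neg[OF that less_trans[OF c1(1) c2]] X by simp
  have "opposite_defects c1 c2" by (rule opposite_defectsI(1)[OF small large])
  then show ?thesis using c1 c2 by blast
qed

lemma opposite_defects_if_superlinear_at_0:
  assumes "filterlim (\<lambda>x. f x / x) at_top (at_right 0)" "((\<lambda>x. f x / x) \<longlongrightarrow> 0) at_top"
  shows "\<exists>c1 c2. 0 < c1 \<and> c1 < c2 \<and> opposite_defects c1 c2"
proof -
  obtain \<epsilon> where \<epsilon>: "0 < \<epsilon>" and pos: "\<And>d c \<sigma> u C. lagged_solution d c \<sigma> u \<Longrightarrow> 0 < c
      \<Longrightarrow> \<forall>x\<in>{0..c}. f x \<le> \<epsilon> * x + C \<Longrightarrow> 4 * T * T * A * C < (1 - \<alpha> * \<eta>) * c \<Longrightarrow> 0 < defect u"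
    by (rule sublinear_threshold) (rule that)
  obtain \<delta> M where \<delta>: "0 < \<delta>" and neg: "\<And>d c \<sigma> u. lagged_solution d c \<sigma> u \<Longrightarrow> 0 < c
      \<Longrightarrow> \<forall>x\<in>{\<delta> * c..c}. M * x \<le> f x \<Longrightarrow> defect u < 0"
    by (rule superlinear_threshold) (rule that)
  obtain c1 where c1: "0 < c1" "\<forall>x\<in>{0<..c1}. M * x \<le> f x" by (rule superlinear_at_0_bound[OF assms(1)])
  then have "\<forall>x\<in>{\<delta> * c1..c1}. M * x \<le> f x" using mult_pos_pos[OF \<delta> c1(1)] by auto
  then have small: "defect u < 0" if "lagged_solution d c1 \<sigma> u" for d \<sigma> u
    using neg[OF that c1(1)] by blast
  obtain C where C: "0 \<le> C" "\<forall>x\<ge>0. f x \<le> \<epsilon> * x + C" by (rule sublinear_at_top_bound[OF assms(2) \<epsilon>])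
  define c2 where "c2 = max (c1 + 1) ((4 * T * T * A * C + 1) / (1 - \<alpha> * \<eta>))"
  have c2: "c1 < c2" unfolding c2_def by simp
  have "(4 * T * T * A * C + 1) / (1 - \<alpha> * \<eta>) \<le> c2" unfolding c2_def by simp
  then have "4 * T * T * A * C + 1 \<le> (1 - \<alpha> * \<eta>) * c2"
    using alpha by (simp add: pos_divide_le_eq mult.commute)
  then have large: "0 < defect u" if "lagged_solution d c2 \<sigma> u" for d \<sigma> u
    using pos[OF that less_trans[OF c1(1) c2], of C] C(2) by simp
  have "opposite_defects c1 c2" by (rule opposite_defectsI(2)[OF large small])
  then show ?thesis using c1 c2 by blast
qed

section \<open>Convergence of Euler polygons\<close>

lemma lagged_bounds:
  assumes sol: "lagged_solution d c \<sigma> u" and "0 < c" and B: "\<forall>x\<in>{0..c}. f x \<le> B"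
    and t: "t \<in> {0..T}" "t' \<in> {0..T}"
  shows "\<bar>u t\<bar> \<le> c + 2 * T * (A * B) * T" and "\<bar>u t - u t'\<bar> \<le> 2 * T * (A * B) * \<bar>t - t'\<bar>"
proof -
  note mono_lip = lagged_antimono_lipschitz[OF sol \<open>0 < c\<close> B]
  have "0 \<le> f 0" "f 0 \<le> B" using f_nonneg B \<open>0 < c\<close> by auto
  then have AB: "0 \<le> A * B" using A_nonneg by simp
  have "c - u t \<le> 2 * T * (A * B) * T"
    using mono_lip(2)[of 0 t] lagged_at_0[OF sol \<open>0 < c\<close>] t T_pos AB
    by (auto intro: order_trans[OF _ mult_left_mono])
  then show "\<bar>u t\<bar> \<le> c + 2 * T * (A * B) * T"
    using lagged_le_initial[OF sol \<open>0 < c\<close> t(1)] \<open>0 < c\<close> by linarith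
  show "\<bar>u t - u t'\<bar> \<le> 2 * T * (A * B) * \<bar>t - t'\<bar>"
    using mono_lip[of t t'] mono_lip[of t' t] t by (cases "t \<le> t'") auto
qed

lemma euler_lagged:
  assumes "0 < h" "T < real n * h"
  shows "lagged_solution h c (euler_rate a (\<lambda>x. f (max x 0)) h c n) (euler a (\<lambda>x. f (max x 0)) h c n)"
  unfolding lagged_solution_def
proof (intro conjI ballI)
  fix s assume s: "s \<in> {0..T}"
  define q where "q = real (nat \<lfloor>s / h\<rfloor>) * h"
  have "q \<in> {0..s}" "s - q \<le> h" using grid_floor_bounds[OF assms(1), of s] s unfolding q_def by auto
  moreover have "euler_rate a (\<lambda>x. f (max x 0)) h c n s = f (max (euler a (\<lambda>x. f (max x 0)) h c n q) 0)"
    unfolding q_def by (rule euler_rate_eq[OF assms(1)]) (use s assms(2) in auto)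
  ultimately show "\<exists>q\<in>{0..s}. s - q \<le> h \<and> euler_rate a (\<lambda>x. f (max x 0)) h c n s
      = f (max (euler a (\<lambda>x. f (max x 0)) h c n q) 0)"
    by blast
qed (use euler_eq_second_primitive[OF a_cont] in auto)

lemma euler_defect_zero:
  assumes "0 < c1" "c1 \<le> c2" "opposite_defects c1 c2" "0 < h" "T < real n * h"
  shows "\<exists>c\<in>{c1..c2}. defect (euler a (\<lambda>x. f (max x 0)) h c n) = 0"
proof (rule IVT_opposite_signs)
  have "continuous_on UNIV (\<lambda>c. defect (euler a (\<lambda>x. f (max x 0)) h c n))"
    unfolding defect_def using eta
    by (intro continuous_intros continuous_euler_initial continuous_f_max0
        continuous_euler_integral_initial[OF continuous_f_max0 a_cont]) simp
  then show "continuous_on {c1..c2} (\<lambda>c. defect (euler a (\<lambda>x. f (max x 0)) h c n))"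
    by (rule continuous_on_subset) simp
  have "defect (euler a (\<lambda>x. f (max x 0)) h c1 n) * defect (euler a (\<lambda>x. f (max x 0)) h c2 n) < 0"
    using assms(3) euler_lagged[OF assms(4,5)] unfolding opposite_defects_def by blast
  then show "defect (euler a (\<lambda>x. f (max x 0)) h c1 n) * defect (euler a (\<lambda>x. f (max x 0)) h c2 n) \<le> 0"
    by simp
qed (rule assms(2))

lemma tendsto_defect:
  assumes "uniform_limit {0..T} F v sequentially" "\<And>n. continuous_on {0..T} (F n)"
  shows "(\<lambda>n. defect (F n)) \<longlonglongrightarrow> defect v"
proof -
  have sub: "{0..\<eta>} \<subseteq> {0..T}" using eta by auto
  have "(\<lambda>n. integral {0..\<eta>} (F n)) \<longlonglongrightarrow> integral {0..\<eta>} v"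
    using uniform_limit_on_subset[OF assms(1) sub] continuous_on_subset[OF assms(2) sub]
    by (rule tendsto_integral_uniform_limit)
  moreover have "(\<lambda>n. F n T) \<longlonglongrightarrow> v T" using tendsto_uniform_limitI[OF assms(1)] T_pos by simp
  ultimately show ?thesis unfolding defect_def by (intro tendsto_intros)
qed

lemma lagged_solution_0I:
  assumes "continuous_on {0..T} v" "\<forall>t\<in>{0..T}. v t = c - second_primitive (\<lambda>s. a s * f (max (v s) 0)) t"
  shows "lagged_solution 0 c (\<lambda>s. f (max (v s) 0)) v"
  unfolding lagged_solution_def
proof (intro conjI ballI)
  show "moment_integrable T (\<lambda>s. a s * f (max (v s) 0))"
    by (intro moment_integrable_continuous continuous_intros a_cont
        continuous_on_compose2[OF continuous_f_max0 assms(1)]) simp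
  show "\<exists>q\<in>{0..s}. s - q \<le> 0 \<and> f (max (v s) 0) = f (max (v q) 0)" if "s \<in> {0..T}" for s
    using that by (intro bexI[of _ s]) auto
qed (use assms(2) in blast)

lemma lagged_convergent_subsequence:
  assumes sol: "\<And>n. lagged_solution (d n) (c n) (\<sigma> n) (u n)"
    and c: "\<And>n. c n \<in> {c1..c2}" "0 < c1" and d: "d \<longlonglongrightarrow> 0"
  obtains r v where "strict_mono r" "continuous_on {0..T} v"
    "uniform_limit {0..T} (u \<circ> r) v sequentially"
    "uniform_limit {0..T} (\<sigma> \<circ> r) (\<lambda>s. f (max (v s) 0)) sequentially"
proof -
  have c_pos: "0 < c n" for n using c by (auto intro: less_le_trans)
  obtain B where B: "0 \<le> B" "\<forall>x\<in>{0..c2}. f x \<le> B" by (rule f_bounded)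
  have B_n: "\<forall>x\<in>{0..c n}. f x \<le> B" for n
    using B(2) c(1)[of n] by (meson atLeastAtMost_iff order_trans)
  define R where "R = c2 + 2 * T * (A * B) * T"
  have bound: "\<bar>u n t\<bar> \<le> R" if "t \<in> {0..T}" for n t
    using lagged_bounds(1)[OF sol[of n] c_pos[of n] B_n[of n] that that] c(1)[of n] unfolding R_def by simp
  have lip: "\<bar>u n t - u n t'\<bar> \<le> 2 * T * (A * B) * \<bar>t - t'\<bar>" if "t \<in> {0..T}" "t' \<in> {0..T}" for n t t'
    using lagged_bounds(2)[OF sol c_pos B_n that] .
  obtain r v where r: "strict_mono r" and v: "continuous_on {0..T} v"
    and lim: "uniform_limit {0..T} (u \<circ> r) v sequentially"
    by (rule equilipschitz_convergent_subsequence[OF compact_Icc bound lip])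
  have "\<forall>n. \<forall>s\<in>{0..T}. \<exists>q. q \<in> {0..s} \<and> s - q \<le> d n \<and> \<sigma> n s = f (max (u n q) 0)"
    using lagged_rate[OF sol c_pos] by blast
  then obtain p where p: "\<And>n s. s \<in> {0..T} \<Longrightarrow> p n s \<in> {0..s} \<and> s - p n s \<le> d n \<and> \<sigma> n s = f (max (u n (p n s)) 0)"
    by metis
  have composed: "uniform_limit {0..T} (\<lambda>n s. f (max ((u \<circ> r) n (p (r n) s)) 0)) (\<lambda>s. f (max (v s) 0))
      sequentially"
  proof (rule uniform_limit_delayed_compose[OF lim, where g="\<lambda>x. f (max x 0)" and R=R])
    show "\<bar>(u \<circ> r) n t - (u \<circ> r) n t'\<bar> \<le> 2 * T * (A * B) * \<bar>t - t'\<bar>"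
      if "t \<in> {0..T}" "t' \<in> {0..T}" for n t t' using lip[OF that] by simp
    show "p (r n) s \<in> {0..T} \<and> \<bar>s - p (r n) s\<bar> \<le> (d \<circ> r) n" if "s \<in> {0..T}" for n s
      using p[OF that, of "r n"] that by auto
    show "(d \<circ> r) \<longlonglongrightarrow> 0" by (rule LIMSEQ_subseq_LIMSEQ[OF d r])
    show "\<bar>(u \<circ> r) n t\<bar> \<le> R" if "t \<in> {0..T}" for n t using bound[OF that] by simp
    show "continuous_on {-R..R} (\<lambda>x. f (max x 0))" by (rule continuous_on_subset[OF continuous_f_max0]) simp
  qed
  have "f (max ((u \<circ> r) n (p (r n) s)) 0) = (\<sigma> \<circ> r) n s" if "s \<in> {0..T}" for n s
    using p[OF that, of "r n"] by simp
  then have "uniform_limit {0..T} (\<lambda>n s. f (max ((u \<circ> r) n (p (r n) s)) 0)) (\<lambda>s. f (max (v s) 0)) sequentially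
      \<longleftrightarrow> uniform_limit {0..T} (\<sigma> \<circ> r) (\<lambda>s. f (max (v s) 0)) sequentially"
    by (intro uniform_limit_cong') auto
  with composed have "uniform_limit {0..T} (\<sigma> \<circ> r) (\<lambda>s. f (max (v s) 0)) sequentially" by simp
  with r v lim show thesis by (rule that)
qed

lemma lagged_limit:
  assumes sol: "\<And>n. lagged_solution (d n) (c n) (\<sigma> n) (u n)"
    and c: "\<And>n. c n \<in> {c1..c2}" "0 < c1" and d: "d \<longlonglongrightarrow> 0" and zero: "\<And>n. defect (u n) = 0"
  shows "\<exists>c u. c1 \<le> c \<and> lagged_solution 0 c (\<lambda>s. f (max (u s) 0)) u \<and> defect u = 0"
proof -
  have c_pos: "0 < c n" for n using c by (auto intro: less_le_trans)
  obtain r v where r: "strict_mono r" and v: "continuous_on {0..T} v"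
    and lim: "uniform_limit {0..T} (u \<circ> r) v sequentially"
    and rate: "uniform_limit {0..T} (\<sigma> \<circ> r) (\<lambda>s. f (max (v s) 0)) sequentially"
    by (rule lagged_convergent_subsequence[OF sol c d])
  have pointwise: "(\<lambda>n. u (r n) t) \<longlonglongrightarrow> v t" if "t \<in> {0..T}" for t
    using tendsto_uniform_limitI[OF lim that] by simp
  have fv: "continuous_on {0..T} (\<lambda>s. f (max (v s) 0))"
    by (rule continuous_on_compose2[OF continuous_f_max0 v]) simp
  then have k: "continuous_on {0..T} (\<lambda>s. a s * f (max (v s) 0))"
    by (intro continuous_intros a_cont)
  have kernel: "uniform_limit {0..T} (\<lambda>n s. a s * (\<sigma> \<circ> r) n s) (\<lambda>s. a s * f (max (v s) 0)) sequentially"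
    using bounded_bilinear.bounded_uniform_limit[OF bounded_bilinear_mult uniform_limit_const[where S="{0..T}" and c=a and f=sequentially] rate
        compact_imp_bounded[OF compact_continuous_image[OF fv compact_Icc]]
        compact_imp_bounded[OF compact_continuous_image[OF a_cont compact_Icc]]]
    by simp
  have "(\<lambda>n. u (r n) 0) \<longlonglongrightarrow> v 0" using pointwise T_pos by simp
  then have c_lim: "(\<lambda>n. c (r n)) \<longlonglongrightarrow> v 0" using lagged_at_0[OF sol c_pos] by simp
  have kernel_int: "moment_integrable T (\<lambda>s. a s * (\<sigma> \<circ> r) n s)" for n
    using lagged_kernel_integrable[OF sol c_pos] by simp
  have eq: "v t = v 0 - second_primitive (\<lambda>s. a s * f (max (v s) 0)) t" if t: "t \<in> {0..T}" for t
  proof (rule LIMSEQ_unique[OF pointwise[OF t]])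
    have "(\<lambda>n. second_primitive (\<lambda>s. a s * (\<sigma> \<circ> r) n s) t)
        \<longlonglongrightarrow> second_primitive (\<lambda>s. a s * f (max (v s) 0)) t"
      by (rule second_primitive_tendsto[OF kernel_int moment_integrable_continuous[OF k] kernel])
        (use t in auto)
    then show "(\<lambda>n. u (r n) t) \<longlonglongrightarrow> v 0 - second_primitive (\<lambda>s. a s * f (max (v s) 0)) t"
      using tendsto_diff[OF c_lim] lagged_eq[OF sol c_pos t] by simp
  qed
  have "(\<lambda>n. defect ((u \<circ> r) n)) \<longlonglongrightarrow> defect v"
    by (rule tendsto_defect[OF lim]) (simp add: lagged_continuous[OF sol c_pos])
  then have "defect v = 0" using zero by (simp add: LIMSEQ_const_iff)
  moreover have "c1 \<le> v 0" by (rule LIMSEQ_le_const[OF c_lim]) (use c(1) in auto)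
  moreover have "lagged_solution 0 (v 0) (\<lambda>s. f (max (v s) 0)) v"
    using lagged_solution_0I[OF v] eq by blast
  ultimately show ?thesis by (intro exI[of _ "v 0"] exI[of _ v] conjI)
qed

lemma solution_if_opposite_defects:
  assumes "0 < c1" "c1 \<le> c2" "opposite_defects c1 c2"
  shows "\<exists>c u. 0 < c \<and> lagged_solution 0 c (\<lambda>s. f (max (u s) 0)) u \<and> defect u = 0"
proof -
  define h where "h m = T / real (Suc m)" for m
  \<comment> \<open>\<open>m + 2\<close> steps of length \<open>T / (m + 1)\<close>: the half-open grid cells must also cover \<open>s = T\<close>\<close>
  have h: "0 < h m" "T < real (Suc (Suc m)) * h m" for m
    unfolding h_def using T_pos by (auto simp: field_simps)
  have "\<exists>c\<in>{c1..c2}. defect (euler a (\<lambda>x. f (max x 0)) (h m) c (Suc (Suc m))) = 0" for m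
    by (rule euler_defect_zero[OF assms h])
  then obtain cs where cs: "\<And>m. cs m \<in> {c1..c2}"
    "\<And>m. defect (euler a (\<lambda>x. f (max x 0)) (h m) (cs m) (Suc (Suc m))) = 0"
    by metis
  have "h \<longlonglongrightarrow> 0" unfolding h_def using LIMSEQ_Suc[OF lim_const_over_n[of T]] by simp
  from lagged_limit[OF euler_lagged[OF h] cs(1) assms(1) this cs(2)] assms(1)
  show ?thesis by (meson less_le_trans)
qed

lemma positive_solution_if_defect_zero:
  assumes c: "0 < c" and sol: "lagged_solution 0 c (\<lambda>s. f (max (u s) 0)) u" and "defect u = 0"
  shows "positive_solution T \<eta> \<alpha> a f u"
proof -
  have "0 < u T" using defect_nonneg_imp_end_pos[OF sol c] \<open>defect u = 0\<close> by simp
  then have pos: "0 < u t" if "t \<in> {0..T}" for t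
    using lagged_antimono[OF sol c, of t T] that by auto
  define k where "k s = a s * f (u s)" for s
  have "continuous_on {0..T} (\<lambda>s. a s * f (max (u s) 0))"
    by (intro continuous_intros a_cont continuous_on_compose2[OF continuous_f_max0 lagged_continuous[OF sol c]]) simp
  then have k: "continuous_on {0..T} k"
    by (rule continuous_on_eq) (use pos in \<open>simp add: k_def max_absorb1 less_imp_le\<close>)
  have "u t = c - second_primitive k t" if t: "t \<in> {0..T}" for t
    using lagged_eq[OF sol c t] pos t unfolding k_def
    by (auto simp: max_absorb1 less_imp_le intro!: second_primitive_cong)
  then have C2: "C2_on T u (\<lambda>t. - integral {0..t} k) (\<lambda>t. - k t)"
    by (intro C2_on_second_primitive[OF k]) blast
  moreover have "\<forall>t\<in>{0<..<T}. - k t + a t * f (u t) = 0" by (simp add: k_def)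
  moreover have "u T = \<alpha> * integral {0..\<eta>} u" using \<open>defect u = 0\<close> unfolding defect_def by simp
  moreover have "\<forall>t\<in>{0..T}. 0 \<le> u t" using pos by (simp add: less_imp_le)
  moreover have "\<exists>t\<in>{0..T}. u t \<noteq> 0" using pos T_pos by force
  ultimately show ?thesis
    unfolding positive_solution_def by (intro exI[of _ "\<lambda>t. - integral {0..t} k"] exI[of _ "\<lambda>t. - k t"]) simp
qed

end

theorem theorem3p1:
  fixes T \<eta> \<alpha> :: real and a f :: "real \<Rightarrow> real"
  assumes "T > 0" and "0 < \<eta>" and "\<eta> < T" and "0 < \<alpha>" and "\<alpha> < 1 / \<eta>"
    and "continuous_on {0..} f" and "\<forall>u\<ge>0. f u \<ge> 0"
    and "continuous_on {0..T} a" and "\<forall>t\<in>{0..T}. a t \<ge> 0"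
    and "\<exists>t0\<in>{0..T}. a t0 > 0"
    and "(((\<lambda>u. f u / u) \<longlongrightarrow> 0) (at_right 0) \<and> filterlim (\<lambda>u. f u / u) at_top at_top)
       \<or> (filterlim (\<lambda>u. f u / u) at_top (at_right 0) \<and> ((\<lambda>u. f u / u) \<longlongrightarrow> 0) at_top)"
  shows "\<exists>u. positive_solution T \<eta> \<alpha> a f u"
proof -
  obtain A where "\<forall>x\<in>a ` {0..T}. norm x \<le> A"
    using compact_imp_bounded[OF compact_continuous_image[OF assms(8) compact_Icc]]
    unfolding bounded_iff by blast
  then have "\<forall>t\<in>{0..T}. a t \<le> A" by (auto dest: abs_le_D1)
  then interpret bvp T \<eta> \<alpha> A a f
    using assms by unfold_locales (auto simp: less_divide_eq mult.commute)
  obtain c1 c2 where "0 < c1" "c1 < c2" "opposite_defects c1 c2"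
    using assms(11) opposite_defects_if_sublinear_at_0 opposite_defects_if_superlinear_at_0 by blast
  then obtain c u where "0 < c" "lagged_solution 0 c (\<lambda>s. f (max (u s) 0)) u" "defect u = 0"
    using solution_if_opposite_defects[of c1 c2] by auto
  then show ?thesis using positive_solution_if_defect_zero by blast
qed

end
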